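(* Let $c\in(0,1)$ and $C>0$ be constants, $p=w(n)/n$ with $\log^4n\ll w(n)<cn$, and $k=C\,w(n)^{1/2}$. Let $G\sim G(n,p)$ on vertex set $V=[n]$. For $K\subset V$ with $|K|=k$ and $i\in V\setminus K$ let $X_i$ be the number of neighbors of $i$ in $K$. Then with probability at least $1-\exp(-2k\log n)$, for every choice of $K\subset V$ with $|K|=k$, \[\sum_{i\in V\setminus K}(X_i-kp)^2\le (n-k)kp(1-p)+o(nkp(1-p)),\] where the $o(nkp(1-p))$ term is a function of $n$ only (not depending on $K$).
   Context: $G(n,p)$ is the Erdős–Rényi random graph with edge probability $p$. $f\ll g$ means $f/g\to0$. Logarithms base $2$. *)

theory Defs
  imports "HOL-Probability.Probability" "HOL-Library.Landau_Symbols"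
begin

definition pot_edges :: "nat \<Rightarrow> nat set set" where
  "pot_edges n = {e. \<exists>i j. i \<in> {1..n} \<and> j \<in> {1..n} \<and> i \<noteq> j \<and> e = {i, j}}"

definition gnp :: "nat \<Rightarrow> real \<Rightarrow> (nat set \<Rightarrow> bool) pmf" where
  "gnp n p = Pi_pmf (pot_edges n) False (\<lambda>_. bernoulli_pmf p)"

definition nbrs_in :: "(nat set \<Rightarrow> bool) \<Rightarrow> nat set \<Rightarrow> nat \<Rightarrow> nat" where
  "nbrs_in G K i = card {j \<in> K. j \<noteq> i \<and> G {i, j}}"

end

theory Submission
  imports Defs
begin

(*
  For a fixed set K of size k the counts X_i (i outside K) are independent Bin(k, p) variables,
  because they are determined by disjoint sets of edges.  The summands Y_i = (X_i - kp)^2 have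
  mean kp(1 - p), are bounded by k^2, and by Hoeffding's inequality exceed a level M of order
  k log n only with polynomially small probability.  Split the sum of the Y_i into the truncated
  part sum min(Y_i, M), whose exponential moment is controlled by convexity of exp on [0, M],
  and an excess of at most k^2 times the number of i with Y_i > M, a binomial count with tiny
  mean.  Chernoff bounds for both parts show that a deviation of eps n k p (1 - p) above the
  mean has probability at most n^-(5k), which survives the union bound over the at most n^k
  sets K.  Since log^4 n << w(n), the admissible eps = eps(n), of order
  (log^2 n / sqrt w(n))^(1/3), tends to zero; this gives the o(n k p (1 - p)) error term.
*)

section \<open>Chernoff bounds for products of identical distributions\<close>

lemma prob_Pi_pmf_sum_ge_le_exp:
  fixes g :: "'b \<Rightarrow> real"
  assumes I: "finite I" and D: "finite (set_pmf D)"
  shows "measure_pmf.prob (Pi_pmf I d (\<lambda>_. D)) {X. a \<le> (\<Sum>i\<in>I. g (X i))}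
           \<le> exp (- a) * measure_pmf.expectation D (\<lambda>x. exp (g x)) ^ card I"
proof -
  let ?P = "Pi_pmf I d (\<lambda>_. D)"
  define u where "u X = (\<Prod>i\<in>I. exp (g (X i)))" for X
  have int: "integrable (measure_pmf ?P) u"
    unfolding u_def by (intro integrable_prod_Pi_pmf I integrable_measure_pmf_finite D)
  have event: "{X. a \<le> (\<Sum>i\<in>I. g (X i))} = {X \<in> space (measure_pmf ?P). exp a \<le> u X}"
    by (auto simp: u_def exp_sum[OF I, symmetric])
  have "measure_pmf.prob ?P {X. a \<le> (\<Sum>i\<in>I. g (X i))} \<le> measure_pmf.expectation ?P u / exp a"
    unfolding event
    by (rule integral_Markov_inequality_measure[OF int, where A = "{}"]) (auto simp: u_def prod_nonneg)
  also have "measure_pmf.expectation ?P u = measure_pmf.expectation D (\<lambda>x. exp (g x)) ^ card I"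
    unfolding u_def
    by (subst expectation_prod_Pi_pmf[OF I]) (auto intro: integrable_measure_pmf_finite[OF D])
  finally show ?thesis
    by (simp add: exp_minus field_simps)
qed

lemma exp_mult_le_chord:
  fixes d t :: real
  assumes "0 \<le> t" "t \<le> 1"
  shows "exp (d * t) \<le> 1 + t * (exp d - 1)"
  using convex_onD[OF convex_on_exp[of 1], of t 0 d] assms by (simp add: algebra_simps)

lemma expectation_exp_truncated_le:
  fixes Y :: "'b \<Rightarrow> real"
  assumes D: "finite (set_pmf D)" and Y: "\<And>x. 0 \<le> Y x"
    and mean: "measure_pmf.expectation D Y \<le> \<mu>" and M: "0 < M" and \<delta>: "0 \<le> \<delta>" "\<delta> \<le> 1"
  shows "measure_pmf.expectation D (\<lambda>x. exp (\<delta> / M * min (Y x) M)) \<le> exp ((\<delta> + \<delta>\<^sup>2) * \<mu> / M)"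
proof -
  have int: "integrable (measure_pmf D) h" for h :: "'b \<Rightarrow> real"
    by (rule integrable_measure_pmf_finite[OF D])
  define a where "a = (exp \<delta> - 1) / M"
  have a: "0 \<le> a"
    unfolding a_def using M \<delta> by (intro divide_nonneg_pos) auto
  have chord: "exp (\<delta> / M * min (Y x) M) \<le> 1 + a * min (Y x) M" for x
    using exp_mult_le_chord[of "min (Y x) M / M" \<delta>] M Y[of x] by (simp add: a_def mult.commute)
  have "measure_pmf.expectation D (\<lambda>x. min (Y x) M) \<le> measure_pmf.expectation D Y"
    by (intro integral_mono int) simp
  hence min_le: "measure_pmf.expectation D (\<lambda>x. min (Y x) M) \<le> \<mu>"
    using mean by linarith
  have "measure_pmf.expectation D (\<lambda>x. exp (\<delta> / M * min (Y x) M))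
          \<le> measure_pmf.expectation D (\<lambda>x. 1 + a * min (Y x) M)"
    by (intro integral_mono int chord)
  also have "\<dots> = 1 + a * measure_pmf.expectation D (\<lambda>x. min (Y x) M)"
    by (subst Bochner_Integration.integral_add[OF int int]) simp
  also have "\<dots> \<le> 1 + a * \<mu>"
    using min_le a by (intro add_left_mono mult_left_mono)
  also have "\<dots> \<le> exp (a * \<mu>)"
    by (rule exp_ge_add_one_self)
  also have "\<dots> \<le> exp ((\<delta> + \<delta>\<^sup>2) * \<mu> / M)"
  proof -
    have "0 \<le> measure_pmf.expectation D Y"
      by (intro integral_nonneg_AE AE_I2 Y)
    hence "(exp \<delta> - 1) * \<mu> \<le> (\<delta> + \<delta>\<^sup>2) * \<mu>"
      using exp_bound[OF \<delta>] mean by (intro mult_right_mono) auto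
    from divide_right_mono[OF this, of M] show ?thesis
      using M by (simp add: a_def)
  qed
  finally show ?thesis .
qed

lemma prob_Pi_pmf_truncated_sum_ge:
  fixes Y :: "'b \<Rightarrow> real" and \<mu> s \<delta> :: real
  assumes I: "finite I" and D: "finite (set_pmf D)" and Y: "\<And>x. 0 \<le> Y x"
    and mean: "measure_pmf.expectation D Y \<le> \<mu>" and M: "0 < M" and \<delta>: "0 \<le> \<delta>" "\<delta> \<le> 1"
  shows "measure_pmf.prob (Pi_pmf I d (\<lambda>_. D)) {X. card I * \<mu> + s \<le> (\<Sum>i\<in>I. min (Y (X i)) M)}
           \<le> exp (\<delta> * (card I * \<mu> * \<delta> - s) / M)"
proof (cases "\<delta> = 0")
  case False
  hence scale: "0 < \<delta> / M"
    using \<delta> M by simp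
  let ?E = "measure_pmf.expectation D (\<lambda>x. exp (\<delta> / M * min (Y x) M))"
  have E: "?E \<le> exp ((\<delta> + \<delta>\<^sup>2) * \<mu> / M)"
    by (rule expectation_exp_truncated_le[OF D Y mean M \<delta>])
  have E0: "0 \<le> ?E"
    by (intro Bochner_Integration.integral_nonneg) simp
  have "{X. card I * \<mu> + s \<le> (\<Sum>i\<in>I. min (Y (X i)) M)}
          = {X. \<delta> / M * (card I * \<mu> + s) \<le> (\<Sum>i\<in>I. \<delta> / M * min (Y (X i)) M)}"
    using scale by (simp only: sum_distrib_left[symmetric] mult_le_cancel_left_pos)
  hence "measure_pmf.prob (Pi_pmf I d (\<lambda>_. D)) {X. card I * \<mu> + s \<le> (\<Sum>i\<in>I. min (Y (X i)) M)}
           \<le> exp (- (\<delta> / M * (card I * \<mu> + s))) * ?E ^ card I"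
    using prob_Pi_pmf_sum_ge_le_exp[OF I D] by simp
  also have "\<dots> \<le> exp (- (\<delta> / M * (card I * \<mu> + s))) * exp ((\<delta> + \<delta>\<^sup>2) * \<mu> / M) ^ card I"
    using E E0 by (intro mult_left_mono power_mono) simp_all
  also have "\<dots> = exp (- (\<delta> / M * (card I * \<mu> + s)) + card I * ((\<delta> + \<delta>\<^sup>2) * \<mu> / M))"
    by (simp only: exp_add exp_of_nat_mult)
  also have "- (\<delta> / M * (card I * \<mu> + s)) + card I * ((\<delta> + \<delta>\<^sup>2) * \<mu> / M)
               = \<delta> * (card I * \<mu> * \<delta> - s) / M"
    by (simp add: power2_eq_square add_divide_distrib diff_divide_distrib algebra_simps)
  finally show ?thesis .
qed (simp add: measure_pmf.prob_le_1)

lemma prob_Pi_pmf_truncated_sum_ge_sq: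
  fixes Y :: "'b \<Rightarrow> real" and \<mu> t :: real
  assumes I: "finite I" and D: "finite (set_pmf D)" and Y: "\<And>x. 0 \<le> Y x"
    and mean: "measure_pmf.expectation D Y \<le> \<mu>" and M: "0 < M"
    and t: "0 \<le> t" "t \<le> 4 * card I * \<mu>"
  shows "measure_pmf.prob (Pi_pmf I d (\<lambda>_. D)) {X. card I * \<mu> + t / 2 \<le> (\<Sum>i\<in>I. min (Y (X i)) M)}
           \<le> exp (- t\<^sup>2 / (16 * card I * \<mu> * M))"
proof -
  let ?m = "real (card I)"
  define \<delta> where "\<delta> = t / (4 * ?m * \<mu>)"
  have "0 \<le> 4 * ?m * \<mu>"
    using t by linarith
  hence \<delta>: "0 \<le> \<delta>" "\<delta> \<le> 1"
    using t by (auto simp: \<delta>_def divide_le_eq_1)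
  have "\<delta> * (?m * \<mu> * \<delta> - t / 2) / M = - t\<^sup>2 / (16 * ?m * \<mu> * M)"
  proof (cases "?m * \<mu> = 0")
    case True
    hence "4 * ?m * \<mu> = 0"
      by simp
    hence "t = 0"
      using t by linarith
    thus ?thesis
      by (simp add: \<delta>_def)
  next
    case False
    thus ?thesis
      using M by (simp add: \<delta>_def field_simps power2_eq_square)
  qed
  thus ?thesis
    using prob_Pi_pmf_truncated_sum_ge[OF I D Y mean M \<delta>, of d "t / 2"] by simp
qed

lemma prob_Pi_pmf_count_ge:
  fixes q \<theta> r :: real
  assumes I: "finite I" and D: "finite (set_pmf D)"
    and q: "measure_pmf.prob D {x. P x} \<le> q" and \<theta>: "0 \<le> \<theta>"
  shows "measure_pmf.prob (Pi_pmf I d (\<lambda>_. D)) {X. r \<le> (\<Sum>i\<in>I. of_bool (P (X i)))}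
           \<le> exp (card I * q * exp \<theta> - \<theta> * r)"
proof -
  have q0: "0 \<le> q"
    using q measure_nonneg[of D "{x. P x}"] by linarith
  show ?thesis
  proof (cases "\<theta> = 0")
    case True
    hence "1 \<le> exp (card I * q * exp \<theta> - \<theta> * r)"
      using q0 by simp
    thus ?thesis
      using measure_pmf.prob_le_1 order_trans by blast
  next
    case False
    hence \<theta>: "0 < \<theta>"
      using \<theta> by simp
    let ?E = "measure_pmf.expectation D (\<lambda>x. exp (\<theta> * of_bool (P x)))"
    have "?E = measure_pmf.expectation D (\<lambda>x. 1 + (exp \<theta> - 1) * indicator {x. P x} x)"
      by (intro Bochner_Integration.integral_cong refl) (auto simp: indicator_def)
    also have "\<dots> = 1 + measure_pmf.expectation D (\<lambda>x. (exp \<theta> - 1) * indicator {x. P x} x)"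
      by (subst Bochner_Integration.integral_add) (auto intro: integrable_measure_pmf_finite[OF D])
    also have "\<dots> = 1 + (exp \<theta> - 1) * measure_pmf.prob D {x. P x}"
      by simp
    also have "\<dots> \<le> 1 + (exp \<theta> - 1) * q"
      using q \<theta> by (intro add_left_mono mult_left_mono) auto
    also have "\<dots> \<le> exp ((exp \<theta> - 1) * q)"
      by (rule exp_ge_add_one_self)
    also have "\<dots> \<le> exp (q * exp \<theta>)"
      using q0 by (simp add: algebra_simps)
    finally have E: "?E \<le> exp (q * exp \<theta>)" .
    have "{X. r \<le> (\<Sum>i\<in>I. of_bool (P (X i)))} = {X. \<theta> * r \<le> (\<Sum>i\<in>I. \<theta> * of_bool (P (X i)))}"
      using \<theta> by (simp only: sum_distrib_left[symmetric] mult_le_cancel_left_pos)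
    hence "measure_pmf.prob (Pi_pmf I d (\<lambda>_. D)) {X. r \<le> (\<Sum>i\<in>I. of_bool (P (X i)))}
             \<le> exp (- (\<theta> * r)) * ?E ^ card I"
      using prob_Pi_pmf_sum_ge_le_exp[OF I D] by simp
    also have "\<dots> \<le> exp (- (\<theta> * r)) * exp (q * exp \<theta>) ^ card I"
      using E by (intro mult_left_mono power_mono Bochner_Integration.integral_nonneg) simp_all
    also have "\<dots> = exp (- (\<theta> * r) + card I * (q * exp \<theta>))"
      by (simp only: exp_add exp_of_nat_mult)
    finally show ?thesis
      by (simp add: algebra_simps)
  qed
qed

lemma sum_le_truncated_sum_plus_excess:
  fixes y :: "'a \<Rightarrow> real"
  assumes "0 \<le> M" "\<And>i. i \<in> I \<Longrightarrow> y i \<le> B"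
  shows "(\<Sum>i\<in>I. y i) \<le> (\<Sum>i\<in>I. min (y i) M) + B * (\<Sum>i\<in>I. of_bool (M < y i))"
proof -
  have "y i \<le> min (y i) M + B * of_bool (M < y i)" if "i \<in> I" for i
    using assms(1) assms(2)[OF that] by auto
  hence "(\<Sum>i\<in>I. y i) \<le> (\<Sum>i\<in>I. min (y i) M + B * of_bool (M < y i))"
    by (intro sum_mono)
  thus ?thesis
    by (simp add: sum.distrib sum_distrib_left)
qed

lemma prob_Pi_pmf_sum_gt_le:
  fixes Y :: "'b \<Rightarrow> real" and B \<mu> M q \<theta> t :: real
  assumes I: "finite I" and D: "finite (set_pmf D)"
    and Y: "\<And>x. 0 \<le> Y x" and Y_le: "\<And>x. x \<in> set_pmf D \<Longrightarrow> Y x \<le> B" and B: "0 < B"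
    and mean: "measure_pmf.expectation D Y \<le> \<mu>"
    and M: "0 < M" and tail: "measure_pmf.prob D {x. M < Y x} \<le> q" and \<theta>: "0 \<le> \<theta>"
    and t: "0 \<le> t" "t \<le> 4 * card I * \<mu>"
  shows "measure_pmf.prob (Pi_pmf I d (\<lambda>_. D)) {X. card I * \<mu> + t < (\<Sum>i\<in>I. Y (X i))}
           \<le> exp (- t\<^sup>2 / (16 * card I * \<mu> * M)) + exp (card I * q * exp \<theta> - \<theta> * t / (2 * B))"
proof -
  let ?P = "Pi_pmf I d (\<lambda>_. D)"
  let ?m = "real (card I)"
  define low where "low = {X. ?m * \<mu> + t / 2 \<le> (\<Sum>i\<in>I. min (Y (X i)) M)}"
  define many where "many = {X. t / (2 * B) \<le> (\<Sum>i\<in>I. of_bool (M < Y (X i)))}"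
  have "{X. ?m * \<mu> + t < (\<Sum>i\<in>I. Y (X i))} \<inter> set_pmf ?P \<subseteq> low \<union> many"
  proof (intro subsetI)
    fix X assume X: "X \<in> {X. ?m * \<mu> + t < (\<Sum>i\<in>I. Y (X i))} \<inter> set_pmf ?P"
    have "Y (X i) \<le> B" if "i \<in> I" for i
      using X that I Y_le by (auto simp: set_Pi_pmf PiE_dflt_def)
    hence "(\<Sum>i\<in>I. Y (X i)) \<le> (\<Sum>i\<in>I. min (Y (X i)) M) + B * (\<Sum>i\<in>I. of_bool (M < Y (X i)))"
      using M by (intro sum_le_truncated_sum_plus_excess) auto
    moreover have "B * (\<Sum>i\<in>I. of_bool (M < Y (X i))) < t / 2" if "X \<notin> many"
      using that B by (simp add: many_def field_simps)
    ultimately show "X \<in> low \<union> many"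
      using X by (auto simp: low_def)
  qed
  hence "measure_pmf.prob ?P {X. ?m * \<mu> + t < (\<Sum>i\<in>I. Y (X i))} \<le> measure_pmf.prob ?P (low \<union> many)"
    by (subst measure_Int_set_pmf[symmetric]) (intro measure_pmf.finite_measure_mono, auto)
  also have "\<dots> \<le> measure_pmf.prob ?P low + measure_pmf.prob ?P many"
    by (rule measure_Un_le) auto
  also have "measure_pmf.prob ?P low \<le> exp (- t\<^sup>2 / (16 * ?m * \<mu> * M))"
    using prob_Pi_pmf_truncated_sum_ge_sq[OF I D Y mean M t, of d] by (simp add: low_def)
  also have "measure_pmf.prob ?P many \<le> exp (?m * q * exp \<theta> - \<theta> * t / (2 * B))"
    using prob_Pi_pmf_count_ge[OF I D tail \<theta>, of d "t / (2 * B)"] by (simp add: many_def)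
  finally show ?thesis
    by simp
qed

section \<open>Binomial deviations\<close>

lemma expectation_Pi_pmf_component:
  fixes h :: "'b \<Rightarrow> real"
  assumes "finite I" "i \<in> I"
  shows "measure_pmf.expectation (Pi_pmf I d D) (\<lambda>X. h (X i)) = measure_pmf.expectation (D i) h"
proof -
  have "measure_pmf.expectation (Pi_pmf I d D) (\<lambda>X. h (X i))
          = measure_pmf.expectation (map_pmf (\<lambda>X. X i) (Pi_pmf I d D)) h"
    by simp
  also have "map_pmf (\<lambda>X. X i) (Pi_pmf I d D) = D i"
    using assms by (simp add: Pi_pmf_component)
  finally show ?thesis .
qed

lemma expectation_Pi_pmf_components_mult:
  fixes f g :: "'b \<Rightarrow> real"
  assumes I: "finite I" and D: "finite (set_pmf D)" and ij: "i \<in> I" "j \<in> I" "i \<noteq> j"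
  shows "measure_pmf.expectation (Pi_pmf I d (\<lambda>_. D)) (\<lambda>X. f (X i) * g (X j))
           = measure_pmf.expectation D f * measure_pmf.expectation D g"
proof -
  let ?P = "Pi_pmf I d (\<lambda>_. D)"
  define h where "h l = (if l = i then f else g)" for l
  have int: "integrable (measure_pmf ?P) u" for u :: "('a \<Rightarrow> 'b) \<Rightarrow> real"
    using I D by (intro integrable_measure_pmf_finite) (auto simp: set_Pi_pmf intro!: finite_PiE_dflt)
  have indep_I: "prob_space.indep_vars ?P (\<lambda>_. borel) (\<lambda>l X. h l (X l)) I"
    by (intro prob_space.indep_vars_compose2[OF _ indep_vars_Pi_pmf[OF I]])
       (simp_all add: measure_pmf.prob_space_axioms)
  have indep: "prob_space.indep_vars ?P (\<lambda>_. borel) (\<lambda>l X. h l (X l)) {i, j}"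
    using ij by (intro prob_space.indep_vars_subset[OF measure_pmf.prob_space_axioms indep_I]) simp
  have "measure_pmf.expectation ?P (\<lambda>X. \<Prod>l\<in>{i, j}. h l (X l))
          = (\<Prod>l\<in>{i, j}. measure_pmf.expectation ?P (\<lambda>X. h l (X l)))"
    by (rule prob_space.indep_vars_lebesgue_integral[OF measure_pmf.prob_space_axioms _ indep int]) simp
  moreover have "(\<lambda>X. \<Prod>l\<in>{i, j}. h l (X l)) = (\<lambda>X. f (X i) * g (X j))"
    using ij by (simp add: h_def)
  moreover have "measure_pmf.expectation ?P (\<lambda>X. f (X i)) = measure_pmf.expectation D f"
    using expectation_Pi_pmf_component[OF I ij(1), where h = f and d = d and D = "\<lambda>_. D"] by simp
  moreover have "measure_pmf.expectation ?P (\<lambda>X. g (X j)) = measure_pmf.expectation D g"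
    using expectation_Pi_pmf_component[OF I ij(2), where h = g and d = d and D = "\<lambda>_. D"] by simp
  ultimately show ?thesis
    using ij by (simp add: h_def)
qed

lemma expectation_Pi_pmf_sum_sq:
  fixes g :: "'b \<Rightarrow> real"
  assumes I: "finite I" and D: "finite (set_pmf D)"
    and centered: "measure_pmf.expectation D g = 0"
  shows "measure_pmf.expectation (Pi_pmf I d (\<lambda>_. D)) (\<lambda>X. (\<Sum>i\<in>I. g (X i))\<^sup>2)
           = card I * measure_pmf.expectation D (\<lambda>x. (g x)\<^sup>2)"
proof -
  let ?P = "Pi_pmf I d (\<lambda>_. D)"
  have int: "integrable (measure_pmf ?P) h" for h :: "('a \<Rightarrow> 'b) \<Rightarrow> real"
    using I D by (intro integrable_measure_pmf_finite) (auto simp: set_Pi_pmf intro!: finite_PiE_dflt)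
  have "(\<lambda>X. (\<Sum>i\<in>I. g (X i))\<^sup>2) = (\<lambda>X. \<Sum>i\<in>I. \<Sum>j\<in>I. g (X i) * g (X j))"
    by (simp add: power2_eq_square sum_product)
  hence "measure_pmf.expectation ?P (\<lambda>X. (\<Sum>i\<in>I. g (X i))\<^sup>2)
           = (\<Sum>i\<in>I. \<Sum>j\<in>I. measure_pmf.expectation ?P (\<lambda>X. g (X i) * g (X j)))"
    by (simp add: Bochner_Integration.integral_sum int)
  also have "\<dots> = (\<Sum>i\<in>I. measure_pmf.expectation D (\<lambda>x. (g x)\<^sup>2))"
  proof (intro sum.cong refl)
    fix i assume i: "i \<in> I"
    have cross: "measure_pmf.expectation ?P (\<lambda>X. g (X i) * g (X j)) = 0" if "j \<in> I - {i}" for j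
      using expectation_Pi_pmf_components_mult[OF I D i, where j = j and f = g and g = g] that centered by auto
    have "(\<Sum>j\<in>I. measure_pmf.expectation ?P (\<lambda>X. g (X i) * g (X j)))
            = measure_pmf.expectation ?P (\<lambda>X. g (X i) * g (X i))"
      using cross by (subst sum.remove[OF I i]) (simp add: sum.neutral)
    thus "(\<Sum>j\<in>I. measure_pmf.expectation ?P (\<lambda>X. g (X i) * g (X j)))
            = measure_pmf.expectation D (\<lambda>x. (g x)\<^sup>2)"
      using expectation_Pi_pmf_component[OF I i, where h = "\<lambda>x. (g x)\<^sup>2" and d = d and D = "\<lambda>_. D"]
      by (simp add: power2_eq_square)
  qed
  finally show ?thesis
    by simp
qed

lemma expectation_binomial_pmf_deviation_sq:
  assumes p: "p \<in> {0..1}"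
  shows "measure_pmf.expectation (binomial_pmf k p) (\<lambda>x. (real x - real k * p)\<^sup>2) = real k * p * (1 - p)"
proof -
  have deviation: "real (card {j \<in> {..<k}. f j}) - real k * p = (\<Sum>j<k. of_bool (f j) - p)" for f
  proof -
    have "(\<Sum>j<k. of_bool (f j) :: real) = real (card ({..<k} \<inter> {j. f j}))"
      by (rule sum_of_bool_eq) auto
    also have "{..<k} \<inter> {j. f j} = {j \<in> {..<k}. f j}"
      by blast
    finally show ?thesis
      by (simp add: sum_subtractf)
  qed
  have "measure_pmf.expectation (binomial_pmf k p) (\<lambda>x. (real x - real k * p)\<^sup>2)
          = measure_pmf.expectation (Pi_pmf {..<k} False (\<lambda>_. bernoulli_pmf p))
              (\<lambda>f. (\<Sum>j<k. of_bool (f j) - p)\<^sup>2)"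
    by (simp only: binomial_pmf_altdef'[OF finite_lessThan card_lessThan p, where dflt = False]
                   integral_map_pmf deviation)
  also have "\<dots> = card {..<k} * measure_pmf.expectation (bernoulli_pmf p) (\<lambda>b. (of_bool b - p)\<^sup>2)"
    using p by (intro expectation_Pi_pmf_sum_sq[where g = "\<lambda>b. of_bool b - p"]) simp_all
  also have "\<dots> = real k * p * (1 - p)"
    using p by (simp add: power2_eq_square algebra_simps)
  finally show ?thesis .
qed

lemma binomial_pmf_deviation_sq_le:
  assumes p: "p \<in> {0..1}" and x: "x \<in> set_pmf (binomial_pmf k p)"
  shows "(real x - real k * p)\<^sup>2 \<le> (real k)\<^sup>2"
proof -
  have "x \<le> k"
    using p x by (auto simp: set_pmf_binomial_eq split: if_splits)
  moreover have "real k * p \<le> real k" "0 \<le> real k * p"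
    using p by (simp_all add: mult_left_le)
  ultimately have "\<bar>real x - real k * p\<bar> \<le> \<bar>real k\<bar>"
    unfolding abs_le_iff by simp
  thus ?thesis
    by (simp only: abs_le_square_iff)
qed

lemma prob_binomial_pmf_deviation_sq_gt:
  assumes p: "p \<in> {0..1}" and k: "0 < k" and M: "0 \<le> M"
  shows "measure_pmf.prob (binomial_pmf k p) {x. M < (real x - real k * p)\<^sup>2}
           \<le> 2 * exp (- 2 * M / real k)"
proof -
  have "sqrt M \<le> \<bar>y\<bar>" if "M < y\<^sup>2" for y :: real
    using real_sqrt_less_mono[OF that] by simp
  hence "{x. M < (real x - real k * p)\<^sup>2} \<subseteq> {x. sqrt M \<le> \<bar>real x - real k * p\<bar>}"
    by blast
  hence "measure_pmf.prob (binomial_pmf k p) {x. M < (real x - real k * p)\<^sup>2}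
           \<le> measure_pmf.prob (binomial_pmf k p) {x. sqrt M \<le> \<bar>real x - real k * p\<bar>}"
    by (rule measure_pmf.finite_measure_mono) simp
  also have "\<dots> \<le> 2 * exp (- 2 * (sqrt M)\<^sup>2 / real k)"
    using p k M by (intro binomial_distribution.prob_abs_ge) (auto simp: binomial_distribution_def)
  finally show ?thesis
    using M by simp
qed

section \<open>Neighbour counts in G(n,p)\<close>

lemma Pi_pmf_curry:
  assumes I: "finite I" and K: "finite K"
  shows "Pi_pmf I (\<lambda>_. d) (\<lambda>_. Pi_pmf K d (\<lambda>_. D)) = map_pmf curry (Pi_pmf (I \<times> K) d (\<lambda>_. D))"
proof (rule pmf_eqI)
  fix H :: "'a \<Rightarrow> 'b \<Rightarrow> 'c"
  let ?Q = "Pi_pmf (I \<times> K) d (\<lambda>_. D)"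
  have "pmf (map_pmf curry ?Q) H = pmf (map_pmf curry ?Q) (curry (case_prod H))"
    by simp
  also have "\<dots> = pmf ?Q (case_prod H)"
    by (rule pmf_map_inj') (auto simp: inj_on_def fun_eq_iff)
  finally have curry: "pmf (map_pmf curry ?Q) H = pmf ?Q (case_prod H)" .
  show "pmf (Pi_pmf I (\<lambda>_. d) (\<lambda>_. Pi_pmf K d (\<lambda>_. D))) H = pmf (map_pmf curry ?Q) H"
  proof (cases "\<forall>x. x \<notin> I \<times> K \<longrightarrow> case_prod H x = d")
    case True
    have "pmf (Pi_pmf I (\<lambda>_. d) (\<lambda>_. Pi_pmf K d (\<lambda>_. D))) H = (\<Prod>i\<in>I. pmf (Pi_pmf K d (\<lambda>_. D)) (H i))"
      using True I by (intro pmf_Pi') auto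
    also have "\<dots> = (\<Prod>i\<in>I. \<Prod>j\<in>K. pmf D (H i j))"
      using True K by (intro prod.cong refl pmf_Pi') auto
    also have "\<dots> = (\<Prod>x\<in>I \<times> K. pmf D (case_prod H x))"
      by (simp add: prod.cartesian_product split_def)
    also have "\<dots> = pmf ?Q (case_prod H)"
      using True I K by (intro pmf_Pi'[symmetric]) auto
    finally show ?thesis
      using curry by simp
  next
    case False
    then obtain i j where ij: "(i, j) \<notin> I \<times> K" "H i j \<noteq> d"
      by auto
    have "pmf ?Q (case_prod H) = 0"
      using ij I K by (intro pmf_Pi_outside) auto
    moreover have "pmf (Pi_pmf I (\<lambda>_. d) (\<lambda>_. Pi_pmf K d (\<lambda>_. D))) H = 0"
    proof (cases "i \<in> I")
      case False
      thus ?thesis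
        using ij I by (intro pmf_Pi_outside) (auto simp: fun_eq_iff)
    next
      case True
      hence "pmf (Pi_pmf K d (\<lambda>_. D)) (H i) = 0"
        using ij K by (intro pmf_Pi_outside) auto
      thus ?thesis
        using True I by (subst pmf_Pi) (auto intro: prod_zero)
    qed
    ultimately show ?thesis
      using curry by simp
  qed
qed

lemma finite_pot_edges: "finite (pot_edges n)"
  by (rule finite_subset[of _ "Pow {1..n}"]) (auto simp: pot_edges_def)

lemma gnp_edges_between:
  assumes I: "I \<subseteq> {1..n}" and K: "K \<subseteq> {1..n}" and disjoint: "I \<inter> K = {}"
  shows "map_pmf (\<lambda>G x. x \<in> I \<times> K \<and> G {fst x, snd x}) (gnp n p)
           = Pi_pmf (I \<times> K) False (\<lambda>_. bernoulli_pmf p)"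
proof -
  define h where "h x = (if x \<in> I \<times> K then {fst x, snd x} else {})" for x :: "nat \<times> nat"
  define E where "E = h ` (I \<times> K)"
  have "inj_on h (I \<times> K)"
    using disjoint by (auto simp: inj_on_def h_def doubleton_eq_iff)
  hence bij: "bij_betw h (I \<times> K) E"
    by (simp add: E_def bij_betw_def)
  have outside: "h x \<notin> E" if "x \<notin> I \<times> K" for x
    using that by (auto simp: h_def E_def)
  have E_sub: "E \<subseteq> pot_edges n"
  proof
    fix e assume "e \<in> E"
    then obtain i j where ij: "i \<in> I" "j \<in> K" "e = {i, j}"
      by (auto simp: E_def h_def)
    moreover have "i \<noteq> j"
      using ij disjoint by auto
    ultimately show "e \<in> pot_edges n"
      using I K unfolding pot_edges_def by blast
  qed
  have "Pi_pmf (I \<times> K) False (\<lambda>_. bernoulli_pmf p)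
          = map_pmf (\<lambda>g. g \<circ> h) (Pi_pmf E False (\<lambda>_. bernoulli_pmf p))"
    using I K by (intro Pi_pmf_bij_betw bij outside) (auto intro: finite_subset)
  also have "Pi_pmf E False (\<lambda>_. bernoulli_pmf p) = map_pmf (\<lambda>f e. if e \<in> E then f e else False) (gnp n p)"
    unfolding gnp_def by (rule Pi_pmf_subset[OF finite_pot_edges E_sub])
  also have "map_pmf (\<lambda>g. g \<circ> h) \<dots> = map_pmf (\<lambda>G x. x \<in> I \<times> K \<and> G {fst x, snd x}) (gnp n p)"
    unfolding pmf.map_comp
  proof (intro map_pmf_cong refl ext)
    fix G x
    show "((\<lambda>g. g \<circ> h) \<circ> (\<lambda>f e. if e \<in> E then f e else False)) G x = (x \<in> I \<times> K \<and> G {fst x, snd x})"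
      using outside[of x] by (cases "x \<in> I \<times> K") (simp_all add: E_def h_def)
  qed
  finally show ?thesis ..
qed

lemma gnp_nbrs_in_Pi_binomial:
  assumes K: "K \<subseteq> {1..n}" and p: "p \<in> {0..1}"
  shows "map_pmf (\<lambda>G i. if i \<in> {1..n} - K then nbrs_in G K i else 0) (gnp n p)
           = Pi_pmf ({1..n} - K) 0 (\<lambda>_. binomial_pmf (card K) p)"
proof -
  define I where "I = {1..n} - K"
  have finK: "finite K"
    using K finite_subset by blast
  define successes where "successes f = card {j \<in> K. f j}" for f :: "nat \<Rightarrow> bool"
  have "Pi_pmf I 0 (\<lambda>_. binomial_pmf (card K) p)
          = Pi_pmf I 0 (\<lambda>_. map_pmf successes (Pi_pmf K False (\<lambda>_. bernoulli_pmf p)))"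
    unfolding successes_def using finK p by (subst binomial_pmf_altdef'[where A = K]) auto
  also have "\<dots> = map_pmf (\<lambda>H. successes \<circ> H) (Pi_pmf I (\<lambda>_. False) (\<lambda>_. Pi_pmf K False (\<lambda>_. bernoulli_pmf p)))"
    by (rule Pi_pmf_map) (simp_all add: I_def successes_def)
  also have "\<dots> = map_pmf (\<lambda>H. successes \<circ> H) (map_pmf curry (Pi_pmf (I \<times> K) False (\<lambda>_. bernoulli_pmf p)))"
    by (simp add: Pi_pmf_curry I_def finK)
  also have "Pi_pmf (I \<times> K) False (\<lambda>_. bernoulli_pmf p)
               = map_pmf (\<lambda>G x. x \<in> I \<times> K \<and> G {fst x, snd x}) (gnp n p)"
    using K by (intro gnp_edges_between[symmetric]) (auto simp: I_def)
  also have "map_pmf (\<lambda>H. successes \<circ> H) (map_pmf curry \<dots>)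
               = map_pmf (\<lambda>G i. if i \<in> I then nbrs_in G K i else 0) (gnp n p)"
    unfolding pmf.map_comp
  proof (intro map_pmf_cong refl ext)
    fix G i
    have "{j \<in> K. (i, j) \<in> I \<times> K \<and> G {i, j}} = (if i \<in> I then {j \<in> K. j \<noteq> i \<and> G {i, j}} else {})"
      by (auto simp: I_def)
    thus "((\<lambda>H. successes \<circ> H) \<circ> (curry \<circ> (\<lambda>G x. x \<in> I \<times> K \<and> G {fst x, snd x}))) G i
            = (if i \<in> I then nbrs_in G K i else 0)"
      by (simp add: successes_def nbrs_in_def curry_def)
  qed
  finally show ?thesis
    by (simp add: I_def)
qed

lemma prob_gnp_deviation_sum_gt:
  fixes p t \<theta> M :: real
  assumes K: "K \<subseteq> {1..n}" "card K = k" "0 < k" and p: "p \<in> {0..1}"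
    and M: "0 < M" and \<theta>: "0 \<le> \<theta>"
    and t: "0 \<le> t" "t \<le> 4 * real (n - k) * (k * p * (1 - p))"
  shows "measure_pmf.prob (gnp n p)
           {G. real (n - k) * (k * p * (1 - p)) + t
                 < (\<Sum>i\<in>{1..n} - K. (real (nbrs_in G K i) - real k * p)\<^sup>2)}
         \<le> exp (- t\<^sup>2 / (16 * real (n - k) * (k * p * (1 - p)) * M))
             + exp (2 * real (n - k) * exp (\<theta> - 2 * M / k) - \<theta> * t / (2 * (real k)\<^sup>2))"
proof -
  let ?I = "{1..n} - K"
  let ?B = "binomial_pmf k p"
  let ?Y = "\<lambda>x::nat. (real x - real k * p)\<^sup>2"
  have card_I: "card ?I = n - k"
    using K by (simp add: card_Diff_subset finite_subset)
  have "(\<Sum>i\<in>?I. ?Y (if i \<in> ?I then nbrs_in G K i else 0))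
          = (\<Sum>i\<in>?I. (real (nbrs_in G K i) - real k * p)\<^sup>2)" for G
    by (rule sum.cong) auto
  hence event: "{G. real (n - k) * (k * p * (1 - p)) + t < (\<Sum>i\<in>?I. (real (nbrs_in G K i) - real k * p)\<^sup>2)}
          = (\<lambda>G i. if i \<in> ?I then nbrs_in G K i else 0) -`
              {X. card ?I * (k * p * (1 - p)) + t < (\<Sum>i\<in>?I. ?Y (X i))}"
    using card_I by simp
  have "measure_pmf.prob (gnp n p)
          {G. real (n - k) * (k * p * (1 - p)) + t < (\<Sum>i\<in>?I. (real (nbrs_in G K i) - real k * p)\<^sup>2)}
        = measure_pmf.prob (map_pmf (\<lambda>G i. if i \<in> ?I then nbrs_in G K i else 0) (gnp n p))
            {X. card ?I * (k * p * (1 - p)) + t < (\<Sum>i\<in>?I. ?Y (X i))}"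
    by (simp only: event measure_map_pmf)
  also have "map_pmf (\<lambda>G i. if i \<in> ?I then nbrs_in G K i else 0) (gnp n p) = Pi_pmf ?I 0 (\<lambda>_. ?B)"
    using gnp_nbrs_in_Pi_binomial[OF K(1) p] K(2) by simp
  also have "measure_pmf.prob (Pi_pmf ?I 0 (\<lambda>_. ?B)) {X. card ?I * (k * p * (1 - p)) + t < (\<Sum>i\<in>?I. ?Y (X i))}
               \<le> exp (- t\<^sup>2 / (16 * card ?I * (k * p * (1 - p)) * M))
                   + exp (card ?I * (2 * exp (- 2 * M / k)) * exp \<theta> - \<theta> * t / (2 * (real k)\<^sup>2))"
  proof (rule prob_Pi_pmf_sum_gt_le)
    show "measure_pmf.expectation ?B ?Y \<le> k * p * (1 - p)"
      using p by (simp add: expectation_binomial_pmf_deviation_sq)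
    show "measure_pmf.prob ?B {x. M < ?Y x} \<le> 2 * exp (- 2 * M / k)"
      using p K M by (intro prob_binomial_pmf_deviation_sq_gt) auto
  qed (use p K M \<theta> t card_I binomial_pmf_deviation_sq_le in auto)
  also have "card ?I * (2 * exp (- 2 * M / k)) * exp \<theta> = 2 * real (n - k) * exp (\<theta> - 2 * M / k)"
    using card_I by (simp add: exp_diff exp_minus field_simps)
  finally show ?thesis
    using card_I by simp
qed

section \<open>Choice of the parameters\<close>

lemma ln_ge_2: "9 \<le> x \<Longrightarrow> 2 \<le> ln (x::real)"
proof -
  assume "9 \<le> x"
  moreover have "exp (2::real) \<le> 9"
  proof -
    have "exp (2::real) = exp 1 * exp 1"
      by (simp add: mult_exp_exp)
    also have "\<dots> \<le> 3 * 3"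
      using exp_le by (intro mult_mono) auto
    finally show ?thesis
      by simp
  qed
  ultimately show ?thesis
    by (simp add: ln_ge_iff)
qed

lemma ln_le_log2:
  assumes "1 \<le> x"
  shows "ln x \<le> log 2 x"
proof -
  have "ln (2::real) \<le> 1"
    using ln_le_minus_one[of 2] by simp
  hence "ln x / 1 \<le> ln x / ln 2"
    using assms by (intro divide_left_mono) auto
  thus ?thesis
    by (simp add: log_def)
qed

lemma log2_le_twice_ln:
  assumes "1 \<le> x"
  shows "log 2 x \<le> 2 * ln x"
proof -
  have "1 / 2 \<le> ln (2::real)"
    using ln_add1_ge[of 1] by simp
  moreover have "0 \<le> ln x"
    using assms by simp
  ultimately have "ln x / ln 2 \<le> ln x / (1 / 2)"
    by (intro divide_left_mono) auto
  thus ?thesis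
    by (simp add: log_def)
qed

lemma truncation_exponent_le:
  fixes k n m \<mu> w \<epsilon> c A L :: real
  assumes k: "0 < k" and m: "0 < m" "m \<le> n" and \<mu>: "0 < \<mu>" and n\<mu>: "k * w * (1 - c) \<le> n * \<mu>"
    and A: "0 < A" and L: "0 < L"
    and large: "48 * (A + 1) * k * L\<^sup>2 \<le> \<epsilon>\<^sup>2 * (1 - c) * w"
  shows "- (\<epsilon> * n * \<mu>)\<^sup>2 / (16 * m * \<mu> * (k * (A + 1) * L / 2)) \<le> - 6 * k * L"
proof -
  define M where "M = k * (A + 1) * L / 2"
  have M: "0 < M"
    using k A L by (simp add: M_def)
  have "\<epsilon>\<^sup>2 * n * \<mu> / (16 * M) \<le> (\<epsilon> * n * \<mu>)\<^sup>2 / (16 * m * \<mu> * M)"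
  proof -
    have "\<epsilon>\<^sup>2 * n * \<mu> * m \<le> \<epsilon>\<^sup>2 * n * \<mu> * n"
      using m \<mu> by (intro mult_left_mono) auto
    thus ?thesis
      using m \<mu> M by (simp add: field_simps power2_eq_square)
  qed
  moreover have "6 * k * L * (16 * M) \<le> \<epsilon>\<^sup>2 * n * \<mu>"
  proof -
    have "6 * k * L * (16 * M) = k * (48 * (A + 1) * k * L\<^sup>2)"
      by (simp add: M_def power2_eq_square algebra_simps)
    also have "\<dots> \<le> k * (\<epsilon>\<^sup>2 * (1 - c) * w)"
      using large k by (intro mult_left_mono) auto
    also have "\<dots> = \<epsilon>\<^sup>2 * (k * w * (1 - c))"
      by (simp add: algebra_simps)
    also have "\<dots> \<le> \<epsilon>\<^sup>2 * (n * \<mu>)"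
      using n\<mu> by (intro mult_left_mono) auto
    finally show ?thesis
      by (simp add: mult.assoc)
  qed
  hence "6 * k * L \<le> \<epsilon>\<^sup>2 * n * \<mu> / (16 * M)"
    using M by (simp add: pos_le_divide_eq)
  ultimately show ?thesis
    unfolding M_def[symmetric] by linarith
qed

lemma count_exponent_le:
  fixes k n m \<mu> w \<epsilon> c A L C :: real
  assumes k: "0 < k" "k \<le> C * sqrt w" and C: "0 < C" and n\<mu>: "k * w * (1 - c) \<le> n * \<mu>"
    and A: "A * \<epsilon> * (1 - c) = 14 * C\<^sup>2" and A_pos: "0 < A" and \<epsilon>: "0 \<le> \<epsilon>" and L: "0 < L"
    and m: "0 \<le> m" "m \<le> exp L"
  shows "2 * m * exp (A * L - (A + 1) * L) - A * L * (\<epsilon> * n * \<mu>) / (2 * k\<^sup>2) \<le> 2 - 7 * k * L"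
proof -
  have "0 < sqrt w"
    using k C by (smt (verit) mult_nonneg_nonpos)
  hence "k\<^sup>2 \<le> C\<^sup>2 * w"
    using power_mono[OF k(2), of 2] k by (simp add: power_mult_distrib)
  hence "7 * k * L * (2 * k\<^sup>2) \<le> 7 * k * L * (2 * (C\<^sup>2 * w))"
    using k L by (intro mult_left_mono) auto
  also have "\<dots> = A * L * \<epsilon> * (k * w * (1 - c))"
    by (simp add: A[symmetric] algebra_simps)
  also have "\<dots> \<le> A * L * \<epsilon> * (n * \<mu>)"
    using n\<mu> A_pos L \<epsilon> by (intro mult_left_mono) auto
  finally have "7 * k * L \<le> A * L * (\<epsilon> * n * \<mu>) / (2 * k\<^sup>2)"
    using k by (simp add: pos_le_divide_eq algebra_simps)
  moreover have "m * exp (A * L - (A + 1) * L) \<le> 1"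
  proof -
    have "A * L - (A + 1) * L = - L"
      by (simp add: algebra_simps)
    hence "m * exp (A * L - (A + 1) * L) = m / exp L"
      by (simp add: exp_minus divide_inverse)
    thus ?thesis
      using m by (simp add: pos_divide_le_eq)
  qed
  ultimately show ?thesis
    by linarith
qed

lemma truncation_condition_le:
  fixes k w \<epsilon> c C L A :: real
  assumes k: "k \<le> C * sqrt w" and C: "0 < C" and \<epsilon>: "0 < \<epsilon>" "\<epsilon> \<le> 1" and c: "0 < c" "c < 1"
    and A: "A * \<epsilon> * (1 - c) = 14 * C\<^sup>2"
    and large: "48 * C * (14 * C\<^sup>2 + 1) * L\<^sup>2 \<le> \<epsilon> ^ 3 * (1 - c)\<^sup>2 * sqrt w"
  shows "48 * (A + 1) * k * L\<^sup>2 \<le> \<epsilon>\<^sup>2 * (1 - c) * w"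
proof -
  define e where "e = \<epsilon> * (1 - c)"
  have e: "0 < e" "e \<le> 1"
    using \<epsilon> c by (auto simp: e_def mult_le_one)
  have "0 < A * e"
    using A C by (simp add: e_def mult.assoc)
  hence A_pos: "0 < A"
    using e by (simp add: zero_less_mult_iff)
  have "0 \<le> \<epsilon> ^ 3 * (1 - c)\<^sup>2 * sqrt w"
    using large C by (smt (verit) mult_nonneg_nonneg zero_le_power2)
  moreover have "0 < \<epsilon> ^ 3 * (1 - c)\<^sup>2"
    using \<epsilon> c by simp
  ultimately have sqrt_w: "0 \<le> sqrt w"
    by (metis mult_pos_neg not_le)
  have "48 * (A + 1) * k * L\<^sup>2 * e \<le> 48 * (A + 1) * (C * sqrt w) * L\<^sup>2 * e"
    using k A_pos e by (intro mult_right_mono mult_left_mono) auto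
  also have "\<dots> = 48 * C * ((A + 1) * e) * L\<^sup>2 * sqrt w"
    by (simp add: algebra_simps)
  also have "\<dots> = 48 * C * (14 * C\<^sup>2 + e) * L\<^sup>2 * sqrt w"
    using A by (simp add: e_def algebra_simps)
  also have "\<dots> \<le> 48 * C * (14 * C\<^sup>2 + 1) * L\<^sup>2 * sqrt w"
    using e C sqrt_w by (intro mult_right_mono mult_left_mono) auto
  also have "\<dots> \<le> \<epsilon> ^ 3 * (1 - c)\<^sup>2 * sqrt w * sqrt w"
    using large sqrt_w by (rule mult_right_mono)
  also have "\<dots> = \<epsilon>\<^sup>2 * (1 - c) * w * e"
    using sqrt_w by (simp add: e_def power2_eq_square power3_eq_cube algebra_simps)
  finally show ?thesis
    using e by simp
qed

lemma exp_add_exp_le: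
  fixes x :: real
  assumes "2 \<le> x"
  shows "exp (- 6 * x) + exp (2 - 7 * x) \<le> exp (- 5 * x)"
proof -
  have "2 \<le> exp x"
    using assms exp_ge_add_one_self[of x] by linarith
  hence "2 * exp (- 6 * x) \<le> exp x * exp (- 6 * x)"
    by (rule mult_right_mono) simp
  also have "\<dots> = exp (x + - 6 * x)"
    by (rule mult_exp_exp)
  finally have "2 * exp (- 6 * x) \<le> exp (- 5 * x)"
    by (simp add: algebra_simps)
  moreover have "exp (2 - 7 * x) \<le> exp (- 6 * x)"
    using assms by simp
  ultimately show ?thesis
    by linarith
qed

lemma double_le_of_le_mult_sqrt:
  fixes k n :: nat and C w :: real
  assumes k: "real k \<le> C * sqrt w" and w: "0 < w" "w \<le> real n" and n: "4 * C\<^sup>2 \<le> real n"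
  shows "2 * k \<le> n"
proof -
  have "(real k)\<^sup>2 \<le> (C * sqrt w)\<^sup>2"
    using k by (intro power_mono) auto
  also have "\<dots> = C\<^sup>2 * w"
    using w by (simp add: power_mult_distrib)
  also have "\<dots> \<le> C\<^sup>2 * real n"
    using w by (intro mult_left_mono) auto
  finally have "(2 * real k)\<^sup>2 \<le> 4 * C\<^sup>2 * real n"
    by (simp add: power_mult_distrib)
  also have "\<dots> \<le> (real n)\<^sup>2"
    using n by (simp add: power2_eq_square mult_right_mono)
  finally have "2 * real k \<le> real n"
    by (rule power2_le_imp_le) simp
  thus ?thesis
    by linarith
qed

lemma nat_floor_mult_sqrt_pos:
  fixes C x :: real
  assumes C: "0 < C" and k: "0 < nat \<lfloor>C * sqrt x\<rfloor>"
  shows "0 < x" "real (nat \<lfloor>C * sqrt x\<rfloor>) \<le> C * sqrt x"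
proof -
  have "1 \<le> C * sqrt x"
    using k by linarith
  thus "0 < x"
    using C by (smt (verit) mult_nonneg_nonpos real_sqrt_le_0_iff)
  show "real (nat \<lfloor>C * sqrt x\<rfloor>) \<le> C * sqrt x"
    using \<open>1 \<le> C * sqrt x\<close> by linarith
qed

lemma deviation_parameters:
  fixes n k :: nat and p c C \<epsilon> L :: real
  defines "\<mu> \<equiv> real k * p * (1 - p)" and "t \<equiv> \<epsilon> * real n * (real k * p * (1 - p))"
    and "A \<equiv> 14 * C\<^sup>2 / (\<epsilon> * (1 - c))"
  defines "M \<equiv> real k * (A + 1) * L / 2"
  assumes n: "real n = exp L" "2 \<le> L" and k: "0 < k" "2 * k \<le> n"
    and p: "0 < p" "p \<le> c" and c: "0 < c" "c < 1" and C: "0 < C" and \<epsilon>: "0 < \<epsilon>" "\<epsilon> \<le> 1"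
    and k_le: "real k \<le> C * sqrt (real n * p)"
    and large: "48 * C * (14 * C\<^sup>2 + 1) * L\<^sup>2 \<le> \<epsilon> ^ 3 * (1 - c)\<^sup>2 * sqrt (real n * p)"
  shows "0 < M" "0 \<le> A * L" "0 \<le> t" "t \<le> 4 * real (n - k) * \<mu>"
    and "- t\<^sup>2 / (16 * real (n - k) * \<mu> * M) \<le> - 6 * real k * L"
    and "2 * real (n - k) * exp (A * L - 2 * M / k) - A * L * t / (2 * (real k)\<^sup>2) \<le> 2 - 7 * real k * L"
proof -
  let ?m = "real (n - k)"
  have m: "0 < ?m" "?m \<le> real n" "real n \<le> 2 * ?m"
    using k by auto
  have \<mu>: "0 < \<mu>"
    using k p c by (simp add: \<mu>_def)
  have "real k * (real n * p) * (1 - c) \<le> real k * (real n * p) * (1 - p)"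
    using p by (intro mult_left_mono) auto
  hence n\<mu>: "real k * (real n * p) * (1 - c) \<le> real n * \<mu>"
    by (simp add: \<mu>_def algebra_simps)
  have A: "0 < A" "A * \<epsilon> * (1 - c) = 14 * C\<^sup>2"
    using C \<epsilon> c by (auto simp: A_def)
  show "0 < M" "0 \<le> A * L"
    using k A n by (simp_all add: M_def)
  have "\<epsilon> * real n \<le> 4 * ?m"
    using \<epsilon> m mult_left_le_one_le[of "real n" \<epsilon>] by linarith
  thus "0 \<le> t" "t \<le> 4 * ?m * \<mu>"
    using \<epsilon> \<mu> by (simp_all add: t_def \<mu>_def[symmetric] mult_right_mono)
  have large': "48 * (A + 1) * real k * L\<^sup>2 \<le> \<epsilon>\<^sup>2 * (1 - c) * (real n * p)"
    using truncation_condition_le[OF k_le C \<epsilon> c A(2) large] .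
  show "- t\<^sup>2 / (16 * ?m * \<mu> * M) \<le> - 6 * real k * L"
    unfolding t_def \<mu>_def[symmetric] M_def using k n
    by (intro truncation_exponent_le[OF _ m(1,2) \<mu> n\<mu> A(1) _ large']) auto
  have "2 * M / k = (A + 1) * L"
    using k by (simp add: M_def)
  moreover have "2 * ?m * exp (A * L - (A + 1) * L) - A * L * t / (2 * (real k)\<^sup>2) \<le> 2 - 7 * real k * L"
    unfolding t_def \<mu>_def[symmetric] using k \<epsilon> n m
    by (intro count_exponent_le[OF _ k_le C n\<mu> A(2) A(1)]) auto
  ultimately show "2 * ?m * exp (A * L - 2 * M / k) - A * L * t / (2 * (real k)\<^sup>2) \<le> 2 - 7 * real k * L"
    by simp
qed

section \<open>The bound for fixed n\<close>

lemma prob_gnp_deviation_sum_gt_le_exp: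
  fixes n k :: nat and p c C \<epsilon> :: real
  assumes K: "K \<subseteq> {1..n}" "card K = k" and n: "9 \<le> n" and k: "0 < k" "2 * k \<le> n"
    and p: "0 < p" "p \<le> c" and c: "0 < c" "c < 1" and C: "0 < C" and \<epsilon>: "0 < \<epsilon>" "\<epsilon> \<le> 1"
    and k_le: "real k \<le> C * sqrt (real n * p)"
    and large: "48 * C * (14 * C\<^sup>2 + 1) * (ln (real n))\<^sup>2 \<le> \<epsilon> ^ 3 * (1 - c)\<^sup>2 * sqrt (real n * p)"
  shows "measure_pmf.prob (gnp n p)
           {G. real (n - k) * real k * p * (1 - p) + \<epsilon> * (real n * real k * p * (1 - p))
                 < (\<Sum>i\<in>{1..n} - K. (real (nbrs_in G K i) - real k * p)\<^sup>2)}
         \<le> exp (- 5 * real k * ln (real n))"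
proof -
  define L where "L = ln (real n)"
  define A where "A = 14 * C\<^sup>2 / (\<epsilon> * (1 - c))"
  \<comment> \<open>Hoeffding bounds P(Y_i > M) by 2 n^-(A+1), which beats the factor exp theta = n^A of the count tail\<close>
  define M where "M = real k * (A + 1) * L / 2"
  have L: "real n = exp L" "2 \<le> L"
    using n by (simp_all add: L_def ln_ge_2)
  have "1 * L \<le> real k * L"
    using k L by (intro mult_right_mono) auto
  hence kL: "2 \<le> real k * L"
    using L by linarith
  note parameters = deviation_parameters[OF L k p c C \<epsilon> k_le large[folded L_def], folded A_def M_def]
  have "measure_pmf.prob (gnp n p)
          {G. real (n - k) * (real k * p * (1 - p)) + \<epsilon> * real n * (real k * p * (1 - p))
                < (\<Sum>i\<in>{1..n} - K. (real (nbrs_in G K i) - real k * p)\<^sup>2)}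
        \<le> exp (- (\<epsilon> * real n * (real k * p * (1 - p)))\<^sup>2 / (16 * real (n - k) * (real k * p * (1 - p)) * M))
            + exp (2 * real (n - k) * exp (A * L - 2 * M / k)
                   - A * L * (\<epsilon> * real n * (real k * p * (1 - p))) / (2 * (real k)\<^sup>2))"
    using p c by (intro prob_gnp_deviation_sum_gt[OF K k(1) _ parameters(1-4)]) auto
  also have "\<dots> \<le> exp (- 6 * real k * L) + exp (2 - 7 * real k * L)"
    using parameters(5,6) by (intro add_mono) simp_all
  also have "\<dots> \<le> exp (- 5 * real k * L)"
    using exp_add_exp_le[OF kL] by (simp add: mult.assoc)
  finally show ?thesis
    by (simp add: L_def algebra_simps)
qed

lemma prob_all_ge_union_bound:
  assumes A: "finite A" and bad: "\<And>a. a \<in> A \<Longrightarrow> measure_pmf.prob M {x. \<not> P a x} \<le> \<beta>"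
  shows "1 - real (card A) * \<beta> \<le> measure_pmf.prob M {x. \<forall>a\<in>A. P a x}"
proof -
  have "measure_pmf.prob M (\<Union>a\<in>A. {x. \<not> P a x}) \<le> (\<Sum>a\<in>A. measure_pmf.prob M {x. \<not> P a x})"
    by (rule measure_pmf.finite_measure_subadditive_finite[OF A]) auto
  also have "\<dots> \<le> real (card A) * \<beta>"
    using sum_mono[of A _ "\<lambda>_. \<beta>", OF bad] by simp
  finally have "measure_pmf.prob M (\<Union>a\<in>A. {x. \<not> P a x}) \<le> real (card A) * \<beta>" .
  moreover have "{x. \<forall>a\<in>A. P a x} = space (measure_pmf M) - (\<Union>a\<in>A. {x. \<not> P a x})"
    by auto
  ultimately show ?thesis
    using measure_pmf.prob_compl[of "\<Union>a\<in>A. {x. \<not> P a x}" M] by simp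
qed

lemma prob_gnp_all_deviation_sums_le:
  fixes n k :: nat and p c C \<epsilon> :: real
  assumes n: "9 \<le> n" and k: "0 < k" "2 * k \<le> n"
    and p: "0 < p" "p \<le> c" and c: "0 < c" "c < 1" and C: "0 < C" and \<epsilon>: "0 < \<epsilon>" "\<epsilon> \<le> 1"
    and k_le: "real k \<le> C * sqrt (real n * p)"
    and large: "48 * C * (14 * C\<^sup>2 + 1) * (ln (real n))\<^sup>2 \<le> \<epsilon> ^ 3 * (1 - c)\<^sup>2 * sqrt (real n * p)"
  shows "1 - exp (- 2 * real k * log 2 (real n))
           \<le> measure_pmf.prob (gnp n p)
               {G. \<forall>K. K \<subseteq> {1..n} \<and> card K = k \<longrightarrow>
                  (\<Sum>i\<in>{1..n} - K. (real (nbrs_in G K i) - real k * p)\<^sup>2)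
                    \<le> real (n - k) * real k * p * (1 - p) + \<epsilon> * (real n * real k * p * (1 - p))}"
proof -
  define L where "L = ln (real n)"
  let ?Ks = "{K. K \<subseteq> {1..n} \<and> card K = k}"
  have "finite ?Ks"
    by (rule finite_subset[of _ "Pow {1..n}"]) auto
  hence "1 - real (card ?Ks) * exp (- 5 * real k * L)
           \<le> measure_pmf.prob (gnp n p)
               {G. \<forall>K\<in>?Ks. (\<Sum>i\<in>{1..n} - K. (real (nbrs_in G K i) - real k * p)\<^sup>2)
                    \<le> real (n - k) * real k * p * (1 - p) + \<epsilon> * (real n * real k * p * (1 - p))}"
    using prob_gnp_deviation_sum_gt_le_exp[OF _ _ n k p c C \<epsilon> k_le large]
    by (intro prob_all_ge_union_bound) (auto simp: not_le L_def)
  moreover have "real (card ?Ks) * exp (- 5 * real k * L) \<le> exp (- 2 * real k * log 2 (real n))"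
  proof -
    have "real (card ?Ks) \<le> real n ^ k"
      using binomial_le_pow[OF order_trans[OF _ k(2)]] by (simp add: n_subsets flip: of_nat_power)
    also have "\<dots> = exp (real k * L)"
      using n by (simp add: L_def exp_of_nat_mult)
    finally have "real (card ?Ks) * exp (- 5 * real k * L) \<le> exp (real k * L) * exp (- 5 * real k * L)"
      by (rule mult_right_mono) simp
    also have "\<dots> = exp (- 4 * real k * L)"
      by (simp add: mult_exp_exp algebra_simps)
    also have "\<dots> \<le> exp (- 2 * real k * log 2 (real n))"
    proof -
      have "real k * log 2 (real n) \<le> real k * (2 * L)"
        using log2_le_twice_ln[of "real n"] n by (intro mult_left_mono) (auto simp: L_def)
      thus ?thesis
        by (simp add: ac_simps)
    qed
    finally show ?thesis .
  qed
  ultimately show ?thesis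
    by (simp only: Ball_def mem_Collect_eq)
qed

lemma prob_gnp_deviation_sums_le_at:
  fixes n k :: nat and w p c C :: real
  \<comment> \<open>the least \<epsilon> satisfying the size condition of prob_gnp_all_deviation_sums_le, with log 2 for ln\<close>
  defines "\<epsilon> \<equiv> root 3 (48 * C * (14 * C\<^sup>2 + 1) / (1 - c)\<^sup>2 * (log 2 (real n))\<^sup>2 / sqrt w)"
  assumes n: "9 \<le> n" "4 * C\<^sup>2 \<le> real n" and c: "0 < c" "c < 1" and C: "0 < C"
    and w: "w < c * real n" and p: "p = w / real n" and k: "k = nat \<lfloor>C * sqrt w\<rfloor>"
    and \<epsilon>_le: "0 < w \<longrightarrow> \<epsilon> \<le> 1"
  shows "1 - exp (- 2 * real k * log 2 (real n))
           \<le> measure_pmf.prob (gnp n p)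
               {G. \<forall>K. K \<subseteq> {1..n} \<and> card K = k \<longrightarrow>
                  (\<Sum>i\<in>{1..n} - K. (real (nbrs_in G K i) - real k * p)\<^sup>2)
                    \<le> real (n - k) * real k * p * (1 - p) + \<epsilon> * (real n * real k * p * (1 - p))}"
proof (cases "k = 0")
  case False
  hence w_pos: "0 < w" and k_le: "real k \<le> C * sqrt w"
    using nat_floor_mult_sqrt_pos[OF C] k by auto
  have np: "real n * p = w"
    using n by (simp add: p)
  have p_bounds: "0 < p" "p \<le> c"
    using n w w_pos by (auto simp: p divide_le_eq mult.commute)
  have "c * real n \<le> real n"
    using c by (intro mult_left_le_one_le) auto
  hence two_k: "2 * k \<le> n"
    using double_le_of_le_mult_sqrt[OF k_le w_pos _ n(2)] w by linarith
  define D where "D = 48 * C * (14 * C\<^sup>2 + 1) / (1 - c)\<^sup>2"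
  have \<epsilon>3: "\<epsilon> ^ 3 = D * (log 2 (real n))\<^sup>2 / sqrt w"
    by (simp add: \<epsilon>_def D_def odd_real_root_pow)
  have "0 < log 2 (real n)"
    using n by simp
  moreover have "0 < D"
    using C c by (simp add: D_def add_pos_nonneg)
  ultimately have "0 < D * (log 2 (real n))\<^sup>2 / sqrt w"
    using w_pos by simp
  hence \<epsilon>: "0 < \<epsilon>" "\<epsilon> \<le> 1"
    using \<epsilon>_le w_pos by (auto simp: \<epsilon>_def D_def)
  have "48 * C * (14 * C\<^sup>2 + 1) * (ln (real n))\<^sup>2 \<le> 48 * C * (14 * C\<^sup>2 + 1) * (log 2 (real n))\<^sup>2"
    using C n ln_le_log2[of "real n"] by (intro mult_left_mono power_mono) auto
  also have "\<dots> = \<epsilon> ^ 3 * (1 - c)\<^sup>2 * sqrt w"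
    using c w_pos by (simp add: \<epsilon>3 D_def)
  finally show ?thesis
    using prob_gnp_all_deviation_sums_le[OF n(1) _ two_k p_bounds c C \<epsilon>] False k_le
    by (simp add: np)
qed simp

section \<open>Letting the relative error vanish\<close>

lemma eventually_root_log_sqrt_le:
  fixes w :: "nat \<Rightarrow> real" and D r :: real
  assumes w: "(\<lambda>n. (log 2 (real n)) ^ 4) \<in> o(w)" and D: "0 \<le> D" and r: "0 < r"
  shows "\<forall>\<^sub>F n in at_top. 0 < w n \<longrightarrow> \<bar>root 3 (D * (log 2 (real n))\<^sup>2 / sqrt (w n))\<bar> \<le> r"
proof -
  define \<eta> where "\<eta> = (r ^ 3 / (D + 1))\<^sup>2"
  have "0 < \<eta>"
    using r D by (simp add: \<eta>_def)
  with w have "\<forall>\<^sub>F n in at_top. norm ((log 2 (real n)) ^ 4) \<le> \<eta> * norm (w n)"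
    by (rule landau_o.smallD)
  thus ?thesis
  proof (rule eventually_mono, intro impI)
    fix n assume bound: "norm ((log 2 (real n)) ^ 4) \<le> \<eta> * norm (w n)" and w_pos: "0 < w n"
    let ?l = "(log 2 (real n))\<^sup>2"
    have "?l\<^sup>2 \<le> \<eta> * w n"
      using bound w_pos by (simp flip: power_mult)
    hence "sqrt (?l\<^sup>2) \<le> sqrt (\<eta> * w n)"
      by (rule real_sqrt_le_mono)
    moreover have "sqrt (?l\<^sup>2) = ?l"
      by (rule real_sqrt_unique) simp_all
    moreover have "sqrt (\<eta> * w n) = r ^ 3 / (D + 1) * sqrt (w n)"
      using r D by (simp add: \<eta>_def real_sqrt_mult)
    ultimately have "?l \<le> r ^ 3 / (D + 1) * sqrt (w n)"
      by linarith
    hence "D * ?l \<le> D * (r ^ 3 / (D + 1) * sqrt (w n))"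
      using D by (rule mult_left_mono)
    hence "D * ?l / sqrt (w n) \<le> D * (r ^ 3 / (D + 1))"
      using w_pos by (subst pos_divide_le_eq) (simp_all add: mult.assoc)
    also have "\<dots> \<le> r ^ 3"
      using r D by (simp add: divide_le_eq)
    finally have "root 3 (D * ?l / sqrt (w n)) \<le> r"
      using r by (metis real_root_le_iff real_root_power_cancel zero_less_numeral less_imp_le)
    moreover have "0 \<le> root 3 (D * ?l / sqrt (w n))"
      using D w_pos by simp
    ultimately show "\<bar>root 3 (D * ?l / sqrt (w n))\<bar> \<le> r"
      by simp
  qed
qed

lemma mult_vanishing_in_smallo:
  fixes e g :: "'a \<Rightarrow> real"
  assumes "\<And>r. 0 < r \<Longrightarrow> \<forall>\<^sub>F x in F. g x \<noteq> 0 \<longrightarrow> \<bar>e x\<bar> \<le> r"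
  shows "(\<lambda>x. e x * g x) \<in> o[F](g)"
proof (rule landau_o.smallI)
  fix r :: real assume "0 < r"
  show "\<forall>\<^sub>F x in F. norm (e x * g x) \<le> r * norm (g x)"
    using assms[OF \<open>0 < r\<close>] by eventually_elim (auto simp: abs_mult mult_right_mono)
qed

theorem theoremD1:
  fixes c C :: real and w :: "nat \<Rightarrow> real"
    and p :: "nat \<Rightarrow> real" and k :: "nat \<Rightarrow> nat"
  assumes c: "0 < c" "c < 1" and Cpos: "0 < C"
    and w_large: "(\<lambda>n. (log 2 (real n)) ^ 4) \<in> o(w)"
    and w_small: "\<forall>n. w n < c * real n"
    and p_def: "\<forall>n. p n = w n / real n"
    and k_def: "\<forall>n. k n = nat \<lfloor>C * sqrt (w n)\<rfloor>"
  shows "\<exists>err :: nat \<Rightarrow> real.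
           err \<in> o(\<lambda>n. real n * real (k n) * p n * (1 - p n)) \<and>
           (\<forall>\<^sub>F n in at_top.
              measure_pmf.prob (gnp n (p n))
                {G. \<forall>K. K \<subseteq> {1..n} \<and> card K = k n \<longrightarrow>
                    (\<Sum>i\<in>{1..n} - K. (real (nbrs_in G K i) - real (k n) * p n)\<^sup>2)
                      \<le> real (n - k n) * real (k n) * p n * (1 - p n) + err n}
              \<ge> 1 - exp (- 2 * real (k n) * log 2 (real n)))"
proof -
  let ?g = "\<lambda>n. real n * real (k n) * p n * (1 - p n)"
  define \<epsilon> where "\<epsilon> n = root 3 (48 * C * (14 * C\<^sup>2 + 1) / (1 - c)\<^sup>2 * (log 2 (real n))\<^sup>2 / sqrt (w n))" for n
  have \<epsilon>_small: "\<forall>\<^sub>F n in at_top. 0 < w n \<longrightarrow> \<bar>\<epsilon> n\<bar> \<le> r" if "0 < r" for r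
    unfolding \<epsilon>_def using Cpos c by (intro eventually_root_log_sqrt_le[OF w_large _ that]) simp
  have w_pos: "0 < w n" if "?g n \<noteq> 0" for n
    using that nat_floor_mult_sqrt_pos(1)[OF Cpos] k_def by simp
  show ?thesis
  proof (intro exI conjI)
    show "(\<lambda>n. \<epsilon> n * ?g n) \<in> o(?g)"
    proof (rule mult_vanishing_in_smallo)
      fix r :: real assume "0 < r"
      show "\<forall>\<^sub>F n in at_top. ?g n \<noteq> 0 \<longrightarrow> \<bar>\<epsilon> n\<bar> \<le> r"
        using \<epsilon>_small[OF \<open>0 < r\<close>] by eventually_elim (use w_pos in blast)
    qed
    show "\<forall>\<^sub>F n in at_top. measure_pmf.prob (gnp n (p n)) {G. \<forall>K. K \<subseteq> {1..n} \<and> card K = k n \<longrightarrow>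
              (\<Sum>i\<in>{1..n} - K. (real (nbrs_in G K i) - real (k n) * p n)\<^sup>2)
                \<le> real (n - k n) * real (k n) * p n * (1 - p n) + \<epsilon> n * ?g n}
            \<ge> 1 - exp (- 2 * real (k n) * log 2 (real n))"
      using eventually_ge_at_top[of 9] eventually_ge_at_top[of "nat \<lceil>4 * C\<^sup>2\<rceil>"] \<epsilon>_small[OF zero_less_one]
    proof eventually_elim
      case (elim n)
      have "4 * C\<^sup>2 \<le> real n"
        using elim(2) real_nat_ceiling_ge[of "4 * C\<^sup>2"] by linarith
      thus ?case
        unfolding \<epsilon>_def using elim(1,3)[unfolded \<epsilon>_def] c Cpos w_small p_def k_def
        by (intro prob_gnp_deviation_sums_le_at) (auto dest: abs_le_D1)
    qed
  qed
qed

end
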